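(* Let $R$ be a $*$-ring with $2\in U(R)$. The following are equivalent: (1) $R$ is clean and every unit $u$ of $R$ satisfies $u^*=u$; (2) $R$ is $*$-clean and $*$ is the identity map of $R$.
   Context: A $*$-ring is a ring with identity with an involution $*$. A projection is $p$ with $p^2=p=p^*$. $R$ is clean if every element is a sum of an idempotent and a unit; $*$-clean if every element is a sum of a projection and a unit. *)

theory Defs
  imports Main
begin

definition involution :: "('a::ring_1 \<Rightarrow> 'a) \<Rightarrow> bool" where
  "involution s \<longleftrightarrow> (\<forall>a b. s (a + b) = s a + s b) \<and> (\<forall>a b. s (a * b) = s b * s a) \<and> (\<forall>a. s (s a) = a)"

definition ring_unit :: "'a::ring_1 \<Rightarrow> bool" where
  "ring_unit u \<longleftrightarrow> (\<exists>v. u * v = 1 \<and> v * u = 1)"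

definition idempotent :: "'a::ring_1 \<Rightarrow> bool" where
  "idempotent e \<longleftrightarrow> e * e = e"

definition projection :: "('a::ring_1 \<Rightarrow> 'a) \<Rightarrow> 'a \<Rightarrow> bool" where
  "projection s p \<longleftrightarrow> p * p = p \<and> s p = p"

definition clean_ring :: "'a::ring_1 itself \<Rightarrow> bool" where
  "clean_ring _ \<longleftrightarrow> (\<forall>a::'a. \<exists>e u. idempotent e \<and> ring_unit u \<and> a = e + u)"

definition star_clean :: "('a::ring_1 \<Rightarrow> 'a) \<Rightarrow> bool" where
  "star_clean s \<longleftrightarrow> (\<forall>a. \<exists>p u. projection s p \<and> ring_unit u \<and> a = p + u)"

end

theory Submission
  imports Defs
begin

text \<open>If every unit is fixed by the involution, so is every idempotent \<open>e\<close>: the element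
  \<open>1 - 2e\<close> squares to \<open>1\<close>, so it is fixed, which gives \<open>2(e - e\<^sup>*) = 0\<close>, and \<open>2\<close> is invertible.
  Since a clean ring is spanned additively by idempotents and units, the involution is then
  the identity, and with the identity involution projections are just idempotents.\<close>

lemma additive_map_diff:
  fixes s :: "'a::ring_1 \<Rightarrow> 'a"
  assumes "\<forall>a b. s (a + b) = s a + s b"
  shows "s (a - b) = s a - s b"
  using assms[rule_format, of "a - b" b] by (simp add: eq_diff_eq)

lemma ring_unit_one: "ring_unit (1::'a::ring_1)"
  unfolding ring_unit_def by auto

lemma ring_unit_one_minus_two_idempotent:
  fixes e :: "'a::ring_1"
  assumes "idempotent e"
  shows "ring_unit (1 - 2 * e)"
proof -
  have "(1 - 2 * e) * (1 - 2 * e) = 1"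
    using assms by (simp add: idempotent_def algebra_simps mult_2 mult_2_right)
  then show ?thesis
    unfolding ring_unit_def by auto
qed

lemma double_eq_zero_if_ring_unit_two:
  fixes x :: "'a::ring_1"
  assumes "ring_unit (2::'a)" and "x + x = 0"
  shows "x = 0"
proof -
  obtain v :: 'a where "v * 2 = 1"
    using assms(1) unfolding ring_unit_def by auto
  then have "x = v * (2 * x)"
    by (simp add: mult.assoc [symmetric])
  also have "\<dots> = 0"
    using assms(2) by (simp add: mult_2)
  finally show ?thesis .
qed

lemma idempotent_fixed_if_ring_units_fixed:
  fixes s :: "'a::ring_1 \<Rightarrow> 'a"
  assumes add: "\<forall>a b. s (a + b) = s a + s b"
    and two: "ring_unit (2::'a)"
    and units_fixed: "\<forall>u. ring_unit u \<longrightarrow> s u = u"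
    and e: "idempotent e"
  shows "s e = e"
proof -
  have "1 - (e + e) = s (1 - (e + e))"
    using units_fixed ring_unit_one_minus_two_idempotent [OF e] by (simp add: mult_2)
  also have "\<dots> = 1 - (s e + s e)"
  proof -
    have "s 1 = 1"
      using units_fixed ring_unit_one by blast
    then show ?thesis
      by (simp add: additive_map_diff [OF add] add)
  qed
  finally have "e + e = s e + s e"
    by (rule diff_left_imp_eq)
  moreover have "(e - s e) + (e - s e) = (e + e) - (s e + s e)"
    by (simp add: algebra_simps)
  ultimately have "(e - s e) + (e - s e) = 0"
    by simp
  then have "e - s e = 0"
    by (rule double_eq_zero_if_ring_unit_two [OF two])
  then show ?thesis
    by (simp only: right_minus_eq)
qed

lemma involution_eq_id_if_clean_and_ring_units_fixed:
  fixes s :: "'a::ring_1 \<Rightarrow> 'a"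
  assumes "involution s"
    and "ring_unit (2::'a)"
    and "clean_ring TYPE('a)"
    and units_fixed: "\<forall>u. ring_unit u \<longrightarrow> s u = u"
  shows "s = id"
proof
  fix x :: 'a
  have add: "\<forall>a b. s (a + b) = s a + s b"
    using assms(1) unfolding involution_def by blast
  obtain e u where "idempotent e" "ring_unit u" "x = e + u"
    using assms(3) unfolding clean_ring_def by blast
  then show "s x = id x"
    using add units_fixed idempotent_fixed_if_ring_units_fixed [OF add assms(2) units_fixed]
    by simp
qed

lemma star_clean_id_iff_clean_ring: "star_clean (id::'a::ring_1 \<Rightarrow> 'a) \<longleftrightarrow> clean_ring TYPE('a)"
  unfolding star_clean_def clean_ring_def projection_def idempotent_def by simp

theorem corollary2p4:
  fixes s :: "'a::ring_1 \<Rightarrow> 'a"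
  assumes "involution s"
    and "ring_unit (2::'a)"
  shows "(clean_ring TYPE('a) \<and> (\<forall>u. ring_unit u \<longrightarrow> s u = u))
         \<longleftrightarrow> (star_clean s \<and> s = id)"
proof
  assume "clean_ring TYPE('a) \<and> (\<forall>u. ring_unit u \<longrightarrow> s u = u)"
  then show "star_clean s \<and> s = id"
    using involution_eq_id_if_clean_and_ring_units_fixed [OF assms] star_clean_id_iff_clean_ring
    by blast
next
  assume "star_clean s \<and> s = id"
  then show "clean_ring TYPE('a) \<and> (\<forall>u. ring_unit u \<longrightarrow> s u = u)"
    using star_clean_id_iff_clean_ring by auto
qed

end
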